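(* Let $n$ be a positive integer, $0\le m\le\lfloor n/2\rfloor$ and $0\le k\le m$. Let $M^{(n-m,m)}$ be the complex vector space with basis $\{e_\sigma\}$ indexed by the $m$-element subsets $\sigma$ of $\{1,\dots,n\}$, let $b_0,\dots,b_m$ be complex numbers and let $B_{(n-m,m)}$ be the matrix (in the basis $\{e_\sigma\}$) whose $(\sigma,\tau)$ entry is $b_{\#(\sigma\cap\tau)}$. Let $\Omega=\{n-m+1,\dots,n\}$ and define the linear map $\pi:\mathbb{C}[S_n]\to M^{(n-m,m)}$ by $\pi(g)=e_{g(\Omega)}$ for $g\in S_n$. Let $T_k$ be the Young tableau of shape $(n-k,k)$ whose first row contains $1,\dots,n-k$ and whose second row contains $n-k+1,\dots,n$, with row subgroup $R(T_k)$ and column subgroup $C(T_k)$, and let $c_k=\big(\sum_{q\in C(T_k)}\operatorname{sgn}(q)q\big)\big(\sum_{p\in R(T_k)}p\big)\in\mathbb{C}[S_n]$. Then the coefficient of $e_\Omega$ in $B_{(n-m,m)}\pi(c_k)$ is $$\sum_{v=0}^{k}\sum_{w=0}^{m-k}(-1)^v\binom{k}{v}\binom{m-k}{w}\binom{n-m-v}{w}w!\binom{m-k+v}{m-k-w}(m-k-w)!\,k!\,(n-m)!\;b_{m-v-w}.$$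
   Context: $\#X$ denotes the cardinality of a finite set $X$. The row subgroup $R(T_k)$ (resp. column subgroup $C(T_k)$) consists of the permutations of $\{1,\dots,n\}$ preserving each row (resp. each column) of $T_k$ as a set. Products in the group ring are composition of permutations, $qp=q\circ p$. *)

theory Defs
  imports "HOL-Combinatorics.Permutations" Complex_Main
begin

definition Sn :: "nat \<Rightarrow> (nat \<Rightarrow> nat) set" where
  "Sn n = {p. p permutes {1..n}}"

text \<open>Elements of the group ring C[S_n]: coefficient functions (supported on Sn n).
  Product: (x*y)(g) = sum over a,b in S_n with a o b = g of x(a) y(b).\<close>
definition gr_mult :: "nat \<Rightarrow> ((nat \<Rightarrow> nat) \<Rightarrow> complex) \<Rightarrow> ((nat \<Rightarrow> nat) \<Rightarrow> complex)
    \<Rightarrow> ((nat \<Rightarrow> nat) \<Rightarrow> complex)" where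
  "gr_mult n x y = (\<lambda>g. \<Sum>a\<in>Sn n. \<Sum>b\<in>Sn n. if a \<circ> b = g then x a * y b else 0)"

definition tab_row :: "nat \<Rightarrow> nat \<Rightarrow> nat \<Rightarrow> nat set" where
  "tab_row n k i = (if i = 1 then {1..n-k} else if i = 2 then {n-k+1..n} else {})"

definition tab_col :: "nat \<Rightarrow> nat \<Rightarrow> nat \<Rightarrow> nat set" where
  "tab_col n k j = (if 1 \<le> j \<and> j \<le> n - k then {j} \<union> (if j \<le> k then {n-k+j} else {}) else {})"

definition row_group :: "nat \<Rightarrow> nat \<Rightarrow> (nat \<Rightarrow> nat) set" where
  "row_group n k = {p \<in> Sn n. \<forall>i. p ` tab_row n k i = tab_row n k i}"

definition col_group :: "nat \<Rightarrow> nat \<Rightarrow> (nat \<Rightarrow> nat) set" where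
  "col_group n k = {p \<in> Sn n. \<forall>j. p ` tab_col n k j = tab_col n k j}"

definition young_c :: "nat \<Rightarrow> nat \<Rightarrow> ((nat \<Rightarrow> nat) \<Rightarrow> complex)" where
  "young_c n k = gr_mult n
     (\<lambda>q. if q \<in> col_group n k then of_int (sign q) else 0)
     (\<lambda>p. if p \<in> row_group n k then 1 else 0)"

definition msubsets :: "nat \<Rightarrow> nat \<Rightarrow> nat set set" where
  "msubsets n m = {s. s \<subseteq> {1..n} \<and> card s = m}"

definition Omega :: "nat \<Rightarrow> nat \<Rightarrow> nat set" where
  "Omega n m = {n-m+1..n}"

definition pi_map :: "nat \<Rightarrow> nat \<Rightarrow> ((nat \<Rightarrow> nat) \<Rightarrow> complex) \<Rightarrow> (nat set \<Rightarrow> complex)" where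
  "pi_map n m x = (\<lambda>\<sigma>. \<Sum>g\<in>{g \<in> Sn n. g ` Omega n m = \<sigma>}. x g)"

definition B_apply :: "nat \<Rightarrow> nat \<Rightarrow> (nat \<Rightarrow> complex) \<Rightarrow> (nat set \<Rightarrow> complex) \<Rightarrow> (nat set \<Rightarrow> complex)" where
  "B_apply n m b v = (\<lambda>\<sigma>. \<Sum>\<tau>\<in>msubsets n m. b (card (\<sigma> \<inter> \<tau>)) * v \<tau>)"

end

theory Submission
  imports Defs
begin

text \<open>
  Since \<open>\<pi>(g) = e_{g(\<Omega>)}\<close> and the entries of \<open>B\<close> depend only on intersection sizes,
  the coefficient of \<open>e_\<Omega>\<close> in \<open>B \<pi>(x)\<close> is \<open>\<Sum>_g x(g) b_{#(\<Omega> \<inter> g \<Omega>)}\<close>,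
  so for \<open>x = c_k\<close> we must sum \<open>sgn(q) b_{#(\<Omega> \<inter> q p \<Omega>)}\<close> over \<open>q \<in> C(T_k)\<close>, \<open>p \<in> R(T_k)\<close>.
  The column group consists of the products \<open>q_S\<close> of the commuting transpositions
  \<open>(j, n-k+j)\<close>, \<open>j \<in> S \<subseteq> {1..k}\<close>, with sign \<open>(-1)^#S\<close>.  The row group is
  \<open>S_{n-k} \<times> S_k\<close>, and \<open>\<Omega>\<close> is the second row together with \<open>m-k\<close> points of the first
  row, so \<open>p \<Omega>\<close> runs \<open>k! (m-k)! (n-m)!\<close> times through the sets \<open>A \<union> {n-k+1..n}\<close> with
  \<open>A\<close> an \<open>(m-k)\<close>-subset of the first row.  As \<open>q_S\<close> is an involution,
  \<open>#(\<Omega> \<inter> q_S p \<Omega>) = #(q_S \<Omega> \<inter> p \<Omega>)\<close>, and \<open>q_S \<Omega>\<close> meets the first row in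
  \<open>m-k+#S\<close> points and the second row in \<open>k-#S\<close> points.  Counting the sets \<open>A\<close> by
  \<open>#(A \<inter> q_S \<Omega>)\<close> gives products of binomial coefficients depending only on
  \<open>v = #S\<close>; grouping the \<open>S\<close> by \<open>v\<close> yields the formula.
\<close>

section \<open>Counting permutations and subsets\<close>

lemma sum_eq_sum_card_fibres:
  fixes h :: "'b \<Rightarrow> 'c::semiring_1"
  assumes "finite A" "finite I" "f ` A \<subseteq> I"
  shows "(\<Sum>x\<in>A. h (f x)) = (\<Sum>i\<in>I. of_nat (card {x \<in> A. f x = i}) * h i)"
proof -
  have "(\<Sum>x\<in>A. h (f x)) = (\<Sum>i\<in>I. \<Sum>x\<in>{x \<in> A. f x = i}. h (f x))"
    by (rule sum.group[OF assms, symmetric])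
  also have "\<dots> = (\<Sum>i\<in>I. of_nat (card {x \<in> A. f x = i}) * h i)"
    by (intro sum.cong refl) simp
  finally show ?thesis .
qed

lemma sum_Pow_card:
  assumes "finite K"
  shows "(\<Sum>S\<in>Pow K. h (card S)) = (\<Sum>v=0..card K. of_nat (card K choose v) * h v)"
proof -
  have "card ` Pow K \<subseteq> {0..card K}"
    using assms by (auto intro: card_mono)
  then have "(\<Sum>S\<in>Pow K. h (card S)) = (\<Sum>v=0..card K. of_nat (card {S \<in> Pow K. card S = v}) * h v)"
    using assms by (intro sum_eq_sum_card_fibres[where f = card and h = h]) auto
  also have "\<dots> = (\<Sum>v=0..card K. of_nat (card K choose v) * h v)"
    using assms by (simp add: n_subsets)
  finally show ?thesis .
qed

lemma card_subsets_card_Int: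
  assumes U: "finite U" and X: "X \<subseteq> U" and "i \<le> a"
  shows "card {A. A \<subseteq> U \<and> card A = a \<and> card (A \<inter> X) = i} =
    (card X choose i) * ((card U - card X) choose (a - i))"
proof -
  define P where "P = {B. B \<subseteq> X \<and> card B = i} \<times> {C. C \<subseteq> U - X \<and> card C = a - i}"
  have fin: "finite X" "finite (U - X)"
    using U X finite_subset by auto
  have "bij_betw (\<lambda>(B, C). B \<union> C) P {A. A \<subseteq> U \<and> card A = a \<and> card (A \<inter> X) = i}"
  proof (rule bij_betw_byWitness[where f' = "\<lambda>A. (A \<inter> X, A - X)"])
    show "(\<lambda>(B, C). B \<union> C) ` P \<subseteq> {A. A \<subseteq> U \<and> card A = a \<and> card (A \<inter> X) = i}"
    proof clarify
      fix B C assume "(B, C) \<in> P"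
      then have BC: "B \<subseteq> X" "C \<subseteq> U - X" "card B = i" "card C = a - i"
        by (auto simp: P_def)
      moreover have "finite B" "finite C"
        using BC fin finite_subset by blast+
      moreover have "B \<inter> C = {}"
        using BC by blast
      ultimately have "card (B \<union> C) = a" "(B \<union> C) \<inter> X = B"
        using BC \<open>i \<le> a\<close> by (auto simp: card_Un_disjoint)
      then show "B \<union> C \<subseteq> U \<and> card (B \<union> C) = a \<and> card ((B \<union> C) \<inter> X) = i"
        using BC X by auto
    qed
    show "(\<lambda>A. (A \<inter> X, A - X)) ` {A. A \<subseteq> U \<and> card A = a \<and> card (A \<inter> X) = i} \<subseteq> P"
    proof
      fix y assume "y \<in> (\<lambda>A. (A \<inter> X, A - X)) ` {A. A \<subseteq> U \<and> card A = a \<and> card (A \<inter> X) = i}"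
      then obtain A where A: "A \<subseteq> U" "card A = a" "card (A \<inter> X) = i" and y: "y = (A \<inter> X, A - X)"
        by blast
      have "card A = card (A \<inter> X) + card (A - X)"
        using A U by (metis card_Int_Diff finite_subset)
      then show "y \<in> P"
        using A y by (auto simp: P_def)
    qed
  qed (auto simp: P_def)
  then have "card {A. A \<subseteq> U \<and> card A = a \<and> card (A \<inter> X) = i} = card P"
    by (simp add: bij_betw_same_card)
  also have "\<dots> = (card X choose i) * (card (U - X) choose (a - i))"
    using fin by (simp add: P_def card_cartesian_product n_subsets)
  finally show ?thesis
    using X fin by (simp add: card_Diff_subset)
qed

lemma sum_subsets_card_Int:
  assumes U: "finite U" and X: "X \<subseteq> U"
  shows "(\<Sum>A | A \<subseteq> U \<and> card A = a. g (card (A \<inter> X))) =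
    (\<Sum>i=0..a. of_nat ((card X choose i) * ((card U - card X) choose (a - i))) * g i)"
proof -
  have fin: "finite {A. A \<subseteq> U \<and> card A = a}"
    using U by simp
  have img: "(\<lambda>A. card (A \<inter> X)) ` {A. A \<subseteq> U \<and> card A = a} \<subseteq> {0..a}"
    using U by (auto intro!: card_mono dest: finite_subset)
  have "(\<Sum>A | A \<subseteq> U \<and> card A = a. g (card (A \<inter> X))) =
    (\<Sum>i=0..a. of_nat (card {A \<in> {A. A \<subseteq> U \<and> card A = a}. card (A \<inter> X) = i}) * g i)"
    by (rule sum_eq_sum_card_fibres[OF fin finite_atLeastAtMost img])
  then show ?thesis
    by (simp add: card_subsets_card_Int[OF U X] conj_assoc del: of_nat_mult)
qed

lemma exists_permutes_image:
  assumes "finite U" "D \<subseteq> U" "A \<subseteq> U" "card A = card D"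
  shows "\<exists>r. r permutes U \<and> r ` D = A"
proof -
  have fin: "finite D" "finite A"
    using assms finite_subset by auto
  obtain g where g: "bij_betw g D A"
    using finite_same_card_bij[OF fin] assms(4) by metis
  have "card (U - D) = card (U - A)"
    using assms fin by (simp add: card_Diff_subset)
  then obtain h where h: "bij_betw h (U - D) (U - A)"
    using finite_same_card_bij[of "U - D" "U - A"] assms(1) by auto
  define r where "r x = (if x \<in> D then g x else if x \<in> U then h x else x)" for x
  have rD: "bij_betw r D A"
    using g by (subst bij_betw_cong[where g = g]) (auto simp: r_def)
  moreover have "bij_betw r (U - D) (U - A)"
    using h by (subst bij_betw_cong[where g = h]) (auto simp: r_def)
  ultimately have "bij_betw r (D \<union> (U - D)) (A \<union> (U - A))"
    by (rule bij_betw_combine) auto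
  then have "r permutes U"
    using assms(2,3) by (intro bij_imp_permutes) (auto simp: r_def Un_absorb1)
  with rD show ?thesis
    by (auto simp: bij_betw_def)
qed

lemma permutes_image_disjoint:
  assumes "p permutes A" "X \<inter> A = {}"
  shows "p ` X = X"
proof -
  have "p ` X = id ` X"
    using assms by (intro image_cong) (auto simp: disjoint_iff intro!: permutes_not_in)
  then show ?thesis
    by simp
qed

lemma permutes_Un_image_eq:
  assumes "p permutes A \<union> B" "A \<inter> B = {}" "p ` A = A"
  shows "p ` B = B"
proof -
  have "p ` ((A \<union> B) - A) = (A \<union> B) - A"
    using assms by (simp only: image_set_diff[OF permutes_inj[OF assms(1)]] permutes_image[OF assms(1)])
  moreover have "(A \<union> B) - A = B"
    using assms(2) by blast
  ultimately show ?thesis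
    by simp
qed

lemma permutes_Un_stabilizer_bij:
  assumes "A \<inter> B = {}"
  shows "bij_betw (\<lambda>(p, q). p \<circ> q) ({p. p permutes A} \<times> {q. q permutes B})
           {p. p permutes A \<union> B \<and> p ` A = A}"
proof -
  have split: "restrict_id (p \<circ> q) A = p \<and> restrict_id (p \<circ> q) B = q"
    if pq: "p permutes A" "q permutes B" for p q
  proof -
    have "restrict_id (p \<circ> q) A x = p x" for x
      using pq assms by (cases "x \<in> A") (auto simp: permutes_not_in disjoint_iff)
    moreover have "restrict_id (p \<circ> q) B x = q x" for x
    proof (cases "x \<in> B")
      case True
      then have "q x \<notin> A"
        using pq(2) assms by (auto simp: permutes_in_image)
      with True show ?thesis
        using pq(1) by (simp add: permutes_not_in)
    qed (use pq(2) in \<open>simp add: permutes_not_in\<close>)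
    ultimately show ?thesis
      by auto
  qed
  have merge: "p \<circ> q permutes A \<union> B \<and> (p \<circ> q) ` A = A"
    if pq: "p permutes A" "q permutes B" for p q
  proof -
    have "q ` A = A"
      using pq(2) assms by (rule permutes_image_disjoint)
    then have "(p \<circ> q) ` A = A"
      using permutes_image[OF pq(1)] by (simp only: image_comp[symmetric])
    moreover have "p \<circ> q permutes A \<union> B"
      using pq by (meson permutes_compose permutes_subset sup_ge1 sup_ge2)
    ultimately show ?thesis
      by blast
  qed
  have restrict: "restrict_id p A permutes A \<and> restrict_id p B permutes B \<and>
      restrict_id p A \<circ> restrict_id p B = p"
    if p: "p permutes A \<union> B" "p ` A = A" for p
  proof -
    have pB: "p ` B = B"
      using p(1) assms p(2) by (rule permutes_Un_image_eq)
    then have "restrict_id p A permutes A" "restrict_id p B permutes B"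
      using p by (simp_all add: permutes_restrict_id bij_betw_def permutes_inj_on)
    moreover have "restrict_id p A (restrict_id p B x) = p x" for x
    proof (cases "x \<in> B")
      case True
      then have "p x \<notin> A"
        using pB assms by blast
      with True show ?thesis
        by simp
    qed (use p(1) in \<open>cases "x \<in> A"; simp add: permutes_not_in\<close>)
    ultimately show ?thesis
      by (simp add: fun_eq_iff)
  qed
  show ?thesis
    by (rule bij_betw_byWitness[where f' = "\<lambda>p. (restrict_id p A, restrict_id p B)"])
      (use split merge restrict in \<open>clarsimp simp del: comp_apply\<close>)+
qed

lemma card_permutes_image_eq:
  assumes U: "finite U" and D: "D \<subseteq> U" and A: "A \<subseteq> U" "card A = card D"
  shows "card {p. p permutes U \<and> p ` D = A} = fact (card D) * fact (card U - card D)"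
proof -
  obtain r where r: "r permutes U" "r ` D = A"
    using exists_permutes_image[OF U D A] by blast
  have move: "r \<circ> p permutes U \<and> (r \<circ> p) ` D = A" if "p permutes U" "p ` D = D" for p
    using that r by (simp only: image_comp[symmetric]) (simp add: permutes_compose)
  have move_back: "inv r \<circ> p permutes U \<and> (inv r \<circ> p) ` D = D" if "p permutes U" "p ` D = A" for p
    using that r(1) r(2)[symmetric] permutes_inj[OF r(1)]
    by (simp only: image_comp[symmetric]) (simp add: permutes_compose permutes_inv)
  have cancel: "inv r \<circ> (r \<circ> p) = p" "r \<circ> (inv r \<circ> p) = p" for p
    using permutes_inv_o[OF r(1)] by (simp_all add: o_assoc)
  have "bij_betw ((\<circ>) r) {p. p permutes U \<and> p ` D = D} {p. p permutes U \<and> p ` D = A}"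
    (is "bij_betw _ ?X ?Y")
  proof (rule bij_betw_byWitness[where f' = "(\<circ>) (inv r)"])
    show "\<forall>p\<in>?X. inv r \<circ> (r \<circ> p) = p" "\<forall>p\<in>?Y. r \<circ> (inv r \<circ> p) = p"
      using cancel by blast+
    show "(\<circ>) r ` ?X \<subseteq> ?Y" "(\<circ>) (inv r) ` ?Y \<subseteq> ?X"
      using move move_back by blast+
  qed
  then have "card {p. p permutes U \<and> p ` D = A} = card {p. p permutes D \<union> (U - D) \<and> p ` D = D}"
    using D by (simp add: bij_betw_same_card Un_absorb1)
  also have "\<dots> = card ({p. p permutes D} \<times> {q. q permutes U - D})"
    by (rule bij_betw_same_card[OF permutes_Un_stabilizer_bij, symmetric]) blast
  also have "\<dots> = fact (card D) * fact (card U - card D)"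
    using U D finite_subset[OF D U]
    by (simp add: card_cartesian_product card_permutations[OF refl] card_Diff_subset)
  finally show ?thesis .
qed

lemma sum_permutes_image:
  fixes F :: "'a set \<Rightarrow> 'b::semiring_1"
  assumes U: "finite U" and D: "D \<subseteq> U"
  shows "(\<Sum>p | p permutes U. F (p ` D)) =
    of_nat (fact (card D) * fact (card U - card D)) * (\<Sum>A | A \<subseteq> U \<and> card A = card D. F A)"
proof -
  have "(\<lambda>p. p ` D) ` {p. p permutes U} \<subseteq> {A. A \<subseteq> U \<and> card A = card D}"
    using D by (auto simp: permutes_in_image card_image permutes_inj_on)
  then have "(\<Sum>p | p permutes U. F (p ` D)) =
      (\<Sum>A | A \<subseteq> U \<and> card A = card D. of_nat (card {p \<in> {p. p permutes U}. p ` D = A}) * F A)"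
    using U by (intro sum_eq_sum_card_fibres finite_permutations) auto
  also have "\<dots> = (\<Sum>A | A \<subseteq> U \<and> card A = card D. of_nat (fact (card D) * fact (card U - card D)) * F A)"
    using U D by (intro sum.cong refl) (simp add: card_permutes_image_eq)
  finally show ?thesis
    by (simp add: sum_distrib_left)
qed

lemma image_involution:
  assumes "\<And>x. f (f x) = x"
  shows "f ` A = {y. f y \<in> A}"
proof (intro set_eqI iffI)
  fix y assume "y \<in> {y. f y \<in> A}"
  then have "f (f y) \<in> f ` A"
    by blast
  then show "y \<in> f ` A"
    using assms by simp
qed (use assms in auto)

lemma card_Int_image_involution:
  assumes "\<And>x. f (f x) = x"
  shows "card (A \<inter> f ` B) = card (f ` A \<inter> B)"
proof -
  have "inj f"
    using assms by (metis injI)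
  have "f ` (A \<inter> f ` B) = f ` A \<inter> B"
    using assms by (simp add: image_Int[OF \<open>inj f\<close>] image_comp comp_def)
  then show ?thesis
    using card_image[OF inj_on_subset[OF \<open>inj f\<close> subset_UNIV]] by metis
qed

section \<open>The column group of the tableau\<close>

text \<open>\<open>col_swap N S\<close> is the product of the transpositions \<open>(j, j + N)\<close>, \<open>j \<in> S\<close>;
  for \<open>N = n - k\<close> and \<open>S \<subseteq> {1..k}\<close> these are exactly the elements of \<open>C(T_k)\<close>.\<close>

definition col_swap :: "nat \<Rightarrow> nat set \<Rightarrow> nat \<Rightarrow> nat" where
  "col_swap N S x = (if x \<in> S then x + N else if N < x \<and> x - N \<in> S then x - N else x)"

lemma col_swap_col_swap:
  assumes "S \<subseteq> {1..N}"
  shows "col_swap N S (col_swap N S x) = x"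
  using assms by (auto simp: col_swap_def)

lemma col_swap_apply:
  assumes "S \<subseteq> {1..N}"
  shows col_swap_apply_le: "x \<le> N \<Longrightarrow> col_swap N S x = (if x \<in> S then x + N else x)"
    and col_swap_apply_add: "0 < x \<Longrightarrow> col_swap N S (x + N) = (if x \<in> S then x else x + N)"
  using assms by (auto simp: col_swap_def)

lemma col_swap_permutes:
  assumes "S \<subseteq> {1..k}" "2 * k \<le> n"
  shows "col_swap (n - k) S permutes {1..n}"
proof -
  have S: "S \<subseteq> {1..n - k}" "\<And>x. x \<in> S \<Longrightarrow> x \<le> k"
    using assms by (force simp: subset_iff)+
  have invol: "col_swap (n - k) S (col_swap (n - k) S x) = x" for x
    using S(1) by (rule col_swap_col_swap)
  have "col_swap (n - k) S x = x" if "x \<notin> {1..n}" for x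
    using S that by (fastforce simp: col_swap_def)
  with invol show ?thesis
    unfolding permutes_def by metis
qed

lemma col_swap_insert:
  assumes "insert j S \<subseteq> {1..N}" "j \<notin> S"
  shows "col_swap N (insert j S) = transpose j (j + N) \<circ> col_swap N S"
  using assms by (auto simp: fun_eq_iff col_swap_def transpose_def)

lemma sign_col_swap:
  assumes "S \<subseteq> {1..k}" "2 * k \<le> n"
  shows "sign (col_swap (n - k) S) = (-1) ^ card S"
proof -
  have "finite S"
    using assms(1) finite_subset by blast
  then show ?thesis
    using assms(1)
  proof (induction S rule: finite_induct)
    case empty
    then show ?case
      by (simp add: col_swap_def sign_id flip: id_def)
  next
    case (insert j S)
    have j: "1 \<le> j" "j \<le> k"
      using insert.prems by auto
    have "permutation (col_swap (n - k) S)"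
      using col_swap_permutes[OF _ assms(2)] insert.prems permutation_permutes by blast
    moreover have "col_swap (n - k) (insert j S) = transpose j (j + (n - k)) \<circ> col_swap (n - k) S"
      using insert assms(2) by (intro col_swap_insert) (force simp: subset_iff)+
    ultimately have "sign (col_swap (n - k) (insert j S)) =
        sign (transpose j (j + (n - k))) * sign (col_swap (n - k) S)"
      by (simp only: sign_compose[OF permutation_swap_id])
    also have "sign (transpose j (j + (n - k))) = -1"
      using j assms(2) by (simp add: sign_swap_id)
    finally show ?case
      using insert by simp
  qed
qed

lemma tab_col_eq:
  assumes "2 * k \<le> n"
  shows tab_col_eq_pair: "1 \<le> j \<Longrightarrow> j \<le> k \<Longrightarrow> tab_col n k j = {j, j + (n - k)}"
    and tab_col_eq_single: "k < j \<Longrightarrow> j \<le> n - k \<Longrightarrow> tab_col n k j = {j}"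
  using assms by (auto simp: tab_col_def)

lemma col_swap_in_col_group:
  assumes "S \<subseteq> {1..k}" "2 * k \<le> n"
  shows "col_swap (n - k) S \<in> col_group n k"
proof -
  have S: "S \<subseteq> {1..n - k}"
    using assms by (auto simp: subset_iff)
  have "col_swap (n - k) S ` tab_col n k j = tab_col n k j" for j
  proof (cases "1 \<le> j \<and> j \<le> k")
    case True
    then have "tab_col n k j = {j, j + (n - k)}"
      using assms(2) by (simp add: tab_col_eq_pair)
    moreover have "j \<le> n - k" "0 < j"
      using True assms(2) by auto
    ultimately show ?thesis
      using col_swap_apply_le[OF S, of j] col_swap_apply_add[OF S, of j] by (cases "j \<in> S") auto
  next
    case False
    then have "j \<notin> S"
      using assms(1) by auto
    moreover have "tab_col n k j = (if 1 \<le> j \<and> j \<le> n - k then {j} else {})"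
      using False by (simp add: tab_col_def)
    ultimately show ?thesis
      by (simp add: col_swap_apply_le[OF S])
  qed
  then show ?thesis
    using col_swap_permutes[OF assms] by (simp add: col_group_def Sn_def)
qed

lemma col_group_apply_pair:
  assumes "q \<in> col_group n k" "2 * k \<le> n" "1 \<le> j" "j \<le> k"
  shows "q j = j \<and> q (j + (n - k)) = j + (n - k) \<or> q j = j + (n - k) \<and> q (j + (n - k)) = j"
proof -
  have "q ` tab_col n k j = tab_col n k j"
    using assms(1) by (simp add: col_group_def)
  then have "{q j, q (j + (n - k))} = {j, j + (n - k)}"
    using tab_col_eq_pair[OF assms(2-4)] by simp
  then show ?thesis
    by (simp add: doubleton_eq_iff)
qed

lemma col_group_apply_single:
  assumes "q \<in> col_group n k" "2 * k \<le> n" "k < j" "j \<le> n - k"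
  shows "q j = j"
  using assms tab_col_eq_single[OF assms(2-4)] by (auto simp: col_group_def)

lemma col_group_eq_col_swap:
  assumes q: "q \<in> col_group n k" and kn: "2 * k \<le> n"
  shows "q = col_swap (n - k) {j \<in> {1..k}. q j \<noteq> j}"
proof -
  define N where "N = n - k"
  define S where "S = {j \<in> {1..k}. q j \<noteq> j}"
  have SN: "S \<subseteq> {1..N}"
    using kn by (auto simp: S_def N_def)
  have qp: "q permutes {1..n}"
    using q by (simp add: col_group_def Sn_def)
  note pair = col_group_apply_pair[OF q kn, folded N_def]
  note single = col_group_apply_single[OF q kn, folded N_def]
  have "q x = col_swap N S x" for x
  proof -
    have kN: "k \<le> N"
      using kn by (simp add: N_def)
    consider "x \<notin> {1..n}" | "1 \<le> x" "x \<le> k" | "k < x" "x \<le> N" | "N < x" "x \<le> n"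
      using le_less_linear[of x k] le_less_linear[of x N] by auto
    then show ?thesis
    proof cases
      case 1
      moreover have "col_swap N S permutes {1..n}"
        unfolding N_def by (rule col_swap_permutes[OF _ kn]) (auto simp: S_def)
      ultimately show ?thesis
        using qp by (simp add: permutes_not_in)
    next
      case 2
      then show ?thesis
        using pair[of x] col_swap_apply_le[OF SN, of x] kN by (auto simp: S_def)
    next
      case 3
      then show ?thesis
        using single[of x] col_swap_apply_le[OF SN, of x] by (auto simp: S_def)
    next
      case 4
      define j where "j = x - N"
      have j: "1 \<le> j" "j \<le> k" "x = j + N"
        using 4 by (auto simp: j_def N_def)
      then show ?thesis
        using pair[of j] col_swap_apply_add[OF SN, of j] kN by (auto simp: S_def)
    qed
  qed
  then have "q = col_swap N S"
    by (rule ext)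
  then show ?thesis
    unfolding N_def S_def .
qed

lemma col_swap_bij_col_group:
  assumes "2 * k \<le> n"
  shows "bij_betw (col_swap (n - k)) (Pow {1..k}) (col_group n k)"
proof (rule bij_betw_byWitness[where f' = "\<lambda>q. {j \<in> {1..k}. q j \<noteq> j}"])
  show "\<forall>S\<in>Pow {1..k}. {j \<in> {1..k}. col_swap (n - k) S j \<noteq> j} = S"
  proof
    fix S assume "S \<in> Pow {1..k}"
    then have "S \<subseteq> {1..n - k}"
      using assms by (auto simp: subset_iff)
    then have "col_swap (n - k) S j = (if j \<in> S then j + (n - k) else j)" if "j \<in> {1..k}" for j
      using that assms by (intro col_swap_apply_le) auto
    moreover have "j + (n - k) \<noteq> j" if "j \<in> {1..k}" for j
      using that assms by auto
    ultimately show "{j \<in> {1..k}. col_swap (n - k) S j \<noteq> j} = S"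
      using \<open>S \<in> Pow {1..k}\<close> by (auto split: if_splits)
  qed
  show "\<forall>q\<in>col_group n k. col_swap (n - k) {j \<in> {1..k}. q j \<noteq> j} = q"
  proof
    fix q assume "q \<in> col_group n k"
    from col_group_eq_col_swap[OF this assms]
    show "col_swap (n - k) {j \<in> {1..k}. q j \<noteq> j} = q"
      by (rule sym)
  qed
  show "col_swap (n - k) ` Pow {1..k} \<subseteq> col_group n k"
    using col_swap_in_col_group assms by blast
qed auto

lemma col_swap_image_Omega:
  assumes S: "S \<subseteq> {1..k}" and "k \<le> m" "2 * m \<le> n"
  shows "col_swap (n - k) S ` {n-m+1..n} =
    {n-m+1..n-k} \<union> S \<union> ({n-k+1..n} - (\<lambda>j. j + (n - k)) ` S)"
proof -
  define N where "N = n - k"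
  have SN: "S \<subseteq> {1..N}" and Sk: "\<And>j. j \<in> S \<Longrightarrow> 1 \<le> j \<and> j \<le> k"
    using assms by (auto simp: N_def subset_iff)
  have N: "n - m \<le> N" "k \<le> n - m" "N + k = n"
    using assms by (auto simp: N_def)
  have "col_swap N S y \<in> {n-m+1..n} \<longleftrightarrow> y \<in> {n-m+1..N} \<union> S \<union> ({N+1..n} - (\<lambda>j. j + N) ` S)"
    for y
  proof -
    consider "y \<notin> {1..n}" | "1 \<le> y" "y \<le> N" | "N < y" "y \<le> n"
      using le_less_linear[of y N] by auto
    then show ?thesis
    proof cases
      case 1
      moreover have "col_swap N S permutes {1..n}"
        unfolding N_def using assms by (intro col_swap_permutes) auto
      ultimately show ?thesis
        using N by (auto simp: permutes_not_in dest: Sk)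
    next
      case 2
      then show ?thesis
        using col_swap_apply_le[OF SN 2(2)] N by (auto dest: Sk)
    next
      case 3
      define j where "j = y - N"
      have j: "0 < j" "j \<le> k" "y = j + N"
        using 3 N by (auto simp: j_def)
      then show ?thesis
        using col_swap_apply_add[OF SN j(1)] N by (auto dest: Sk)
    qed
  qed
  then have "col_swap N S ` {n-m+1..n} = {n-m+1..N} \<union> S \<union> ({N+1..n} - (\<lambda>j. j + N) ` S)"
    using image_involution[of "col_swap N S"] col_swap_col_swap[OF SN] by auto
  then show ?thesis
    by (simp only: N_def)
qed

section \<open>The row group of the tableau\<close>

lemma row_group_eq:
  assumes "k \<le> n"
  shows "row_group n k = {p. p permutes {1..n-k} \<union> {n-k+1..n} \<and> p ` {1..n-k} = {1..n-k}}"
proof -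
  have rows: "{1..n-k} \<union> {n-k+1..n} = {1..n}" "{1..n-k} \<inter> {n-k+1..n} = {}"
    using assms by auto
  have "tab_row n k 1 = {1..n-k}" "tab_row n k 2 = {n-k+1..n}"
      "\<And>i. i \<noteq> 1 \<Longrightarrow> i \<noteq> 2 \<Longrightarrow> tab_row n k i = {}"
    by (auto simp: tab_row_def)
  then have stab_rows: "(\<forall>i. p ` tab_row n k i = tab_row n k i) \<longleftrightarrow>
      p ` {1..n-k} = {1..n-k} \<and> p ` {n-k+1..n} = {n-k+1..n}" for p
    by (metis image_empty)
  show ?thesis
  proof (intro set_eqI iffI)
    fix p assume "p \<in> row_group n k"
    then show "p \<in> {p. p permutes {1..n-k} \<union> {n-k+1..n} \<and> p ` {1..n-k} = {1..n-k}}"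
      using rows(1) stab_rows by (simp add: row_group_def Sn_def)
  next
    fix p assume "p \<in> {p. p permutes {1..n-k} \<union> {n-k+1..n} \<and> p ` {1..n-k} = {1..n-k}}"
    then have "p permutes {1..n-k} \<union> {n-k+1..n}" "p ` {1..n-k} = {1..n-k}"
      by simp_all
    moreover have "p ` {n-k+1..n} = {n-k+1..n}"
      using permutes_Un_image_eq[OF calculation(1) rows(2) calculation(2)] .
    ultimately show "p \<in> row_group n k"
      using rows(1) stab_rows by (simp add: row_group_def Sn_def)
  qed
qed

lemma sum_row_group_image_Omega:
  assumes "k \<le> m" "m \<le> n"
  shows "(\<Sum>p\<in>row_group n k. F (p ` {n-m+1..n})) =
    of_nat (fact k * (fact (m-k) * fact (n-m))) *
      (\<Sum>A | A \<subseteq> {1..n-k} \<and> card A = m - k. F (A \<union> {n-k+1..n}))"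
proof -
  define R1 R2 O1 where "R1 = {1..n-k}" and "R2 = {n-k+1..n}" and "O1 = {n-m+1..n-k}"
  have disj: "R1 \<inter> R2 = {}" "O1 \<inter> R2 = {}" "R2 \<inter> R1 = {}" and "O1 \<subseteq> R1"
    and Omega: "{n-m+1..n} = O1 \<union> R2"
    using assms by (auto simp: R1_def R2_def O1_def)
  have image: "(p1 \<circ> p2) ` {n-m+1..n} = p1 ` O1 \<union> R2" if p: "p1 permutes R1" "p2 permutes R2" for p1 p2
  proof -
    have "(p1 \<circ> p2) ` {n-m+1..n} = p1 ` (p2 ` O1 \<union> p2 ` R2)"
      by (simp only: Omega image_comp[symmetric] image_Un)
    also have "\<dots> = p1 ` O1 \<union> p1 ` R2"
      using permutes_image_disjoint[OF p(2) disj(2)] permutes_image[OF p(2)] by (simp add: image_Un)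
    also have "p1 ` R2 = R2"
      using p(1) disj(3) by (rule permutes_image_disjoint)
    finally show ?thesis .
  qed
  have "row_group n k = {p. p permutes R1 \<union> R2 \<and> p ` R1 = R1}"
    using row_group_eq assms by (simp add: R1_def R2_def)
  then have "(\<Sum>p\<in>row_group n k. F (p ` {n-m+1..n})) =
      (\<Sum>(p1, p2) \<in> {p. p permutes R1} \<times> {p. p permutes R2}. F ((p1 \<circ> p2) ` {n-m+1..n}))"
    using sum.reindex_bij_betw[OF permutes_Un_stabilizer_bij[OF disj(1)], of "\<lambda>p. F (p ` {n-m+1..n})"]
    by (simp add: case_prod_unfold)
  also have "\<dots> = (\<Sum>p1 | p1 permutes R1. \<Sum>p2 | p2 permutes R2. F ((p1 \<circ> p2) ` {n-m+1..n}))"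
    by (rule sum.cartesian_product[symmetric])
  also have "\<dots> = (\<Sum>p1 | p1 permutes R1. \<Sum>p2 | p2 permutes R2. F (p1 ` O1 \<union> R2))"
    by (intro sum.cong refl) (simp only: mem_Collect_eq image)
  also have "\<dots> = of_nat (fact k) * (\<Sum>p1 | p1 permutes R1. F (p1 ` O1 \<union> R2))"
    using assms by (simp add: R2_def card_permutations[OF refl] sum_distrib_left)
  also have "\<dots> = of_nat (fact k) * (of_nat (fact (m-k) * fact (n-m)) *
      (\<Sum>A | A \<subseteq> R1 \<and> card A = m - k. F (A \<union> R2)))"
    using sum_permutes_image[of R1 O1 "\<lambda>A. F (A \<union> R2)"] \<open>O1 \<subseteq> R1\<close> assms
    by (simp add: R1_def O1_def)
  finally show ?thesis
    by (simp add: R1_def R2_def mult.assoc)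
qed

section \<open>The coefficient of \<open>e_\<Omega>\<close>\<close>

lemma finite_Sn: "finite (Sn n)"
  unfolding Sn_def by (rule finite_permutations) simp

lemma sum_gr_mult:
  "(\<Sum>g\<in>Sn n. gr_mult n x y g * h g) = (\<Sum>a\<in>Sn n. \<Sum>c\<in>Sn n. x a * y c * h (a \<circ> c))"
proof -
  have "(\<Sum>g\<in>Sn n. gr_mult n x y g * h g) =
      (\<Sum>g\<in>Sn n. \<Sum>a\<in>Sn n. \<Sum>c\<in>Sn n. if a \<circ> c = g then x a * y c * h g else 0)"
    unfolding gr_mult_def sum_distrib_right by (intro sum.cong refl) auto
  also have "\<dots> = (\<Sum>a\<in>Sn n. \<Sum>c\<in>Sn n. \<Sum>g\<in>Sn n. if a \<circ> c = g then x a * y c * h g else 0)"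
    by (subst sum.swap) (subst (2) sum.swap, rule refl)
  also have "\<dots> = (\<Sum>a\<in>Sn n. \<Sum>c\<in>Sn n. x a * y c * h (a \<circ> c))"
    using finite_Sn by (intro sum.cong refl) (auto simp: Sn_def permutes_compose)
  finally show ?thesis .
qed

lemma sum_young_c:
  "(\<Sum>g\<in>Sn n. young_c n k g * h g) =
    (\<Sum>q\<in>col_group n k. \<Sum>p\<in>row_group n k. of_int (sign q) * h (q \<circ> p))"
proof -
  have "(\<Sum>g\<in>Sn n. young_c n k g * h g) =
      (\<Sum>q\<in>Sn n. if q \<in> col_group n k then
         (\<Sum>p\<in>Sn n. if p \<in> row_group n k then of_int (sign q) * h (q \<circ> p) else 0) else 0)"
    unfolding young_c_def sum_gr_mult by (auto intro!: sum.cong)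
  also have "\<dots> = (\<Sum>q\<in>col_group n k. \<Sum>p\<in>row_group n k. of_int (sign q) * h (q \<circ> p))"
  proof -
    have "col_group n k \<subseteq> Sn n" "row_group n k \<subseteq> Sn n"
      by (auto simp: col_group_def row_group_def)
    then show ?thesis
      by (simp add: sum.inter_restrict[OF finite_Sn, symmetric] Int_absorb1)
  qed
  finally show ?thesis .
qed

lemma B_apply_pi_map_Omega:
  assumes "m \<le> n"
  shows "B_apply n m b (pi_map n m x) (Omega n m) =
    (\<Sum>g\<in>Sn n. x g * b (card (Omega n m \<inter> g ` Omega n m)))"
proof -
  have "g ` Omega n m \<subseteq> {1..n}" "card (g ` Omega n m) = m" if "g \<in> Sn n" for g
    using that assms permutes_image[of g "{1..n}"]
    by (auto simp: Sn_def Omega_def card_image permutes_inj_on)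
  then have img: "(\<lambda>g. g ` Omega n m) ` Sn n \<subseteq> msubsets n m"
    by (auto simp: msubsets_def)
  have fin: "finite (msubsets n m)"
    unfolding msubsets_def by (rule finite_subset[of _ "Pow {1..n}"]) auto
  have "B_apply n m b (pi_map n m x) (Omega n m) =
      (\<Sum>\<tau>\<in>msubsets n m. \<Sum>g | g \<in> Sn n \<and> g ` Omega n m = \<tau>. x g * b (card (Omega n m \<inter> g ` Omega n m)))"
    unfolding B_apply_def pi_map_def sum_distrib_left by (intro sum.cong refl) (auto simp: mult.commute)
  also have "\<dots> = (\<Sum>g\<in>Sn n. x g * b (card (Omega n m \<inter> g ` Omega n m)))"
    by (rule sum.group[OF finite_Sn fin img])
  finally show ?thesis .
qed

lemma card_col_swap_image_Omega_Int:
  assumes S: "S \<subseteq> {1..k}" and "k \<le> m" "2 * m \<le> n" and A: "A \<subseteq> {1..n-k}"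
  shows "card (col_swap (n - k) S ` {n-m+1..n} \<inter> (A \<union> {n-k+1..n})) =
    card (A \<inter> ({n-m+1..n-k} \<union> S)) + (k - card S)"
proof -
  define X T where "X = {n-m+1..n-k} \<union> S" and "T = (\<lambda>j. j + (n - k)) ` S"
  have "finite S"
    using S finite_subset by blast
  have "X \<subseteq> {1..n-k}" "T \<subseteq> {n-k+1..n}"
    using assms by (auto simp: X_def T_def subset_iff)
  have "col_swap (n - k) S ` {n-m+1..n} \<inter> (A \<union> {n-k+1..n}) = (A \<inter> X) \<union> ({n-k+1..n} - T)"
    using col_swap_image_Omega[OF assms(1-3)] \<open>X \<subseteq> {1..n-k}\<close> A by (auto simp: X_def T_def)
  moreover have "(A \<inter> X) \<inter> ({n-k+1..n} - T) = {}"
    using A by auto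
  moreover have "card T = card S"
    unfolding T_def by (rule card_image) (simp add: inj_on_def)
  with \<open>T \<subseteq> {n-k+1..n}\<close> have "card ({n-k+1..n} - T) = k - card S"
    using assms by (simp add: card_Diff_subset finite_subset)
  ultimately show ?thesis
    using A by (simp add: card_Un_disjoint finite_subset X_def)
qed

lemma sum_row_group_col_swap:
  assumes S: "S \<subseteq> {1..k}" and "k \<le> m" "2 * m \<le> n"
  shows "(\<Sum>p\<in>row_group n k. b (card ({n-m+1..n} \<inter> (col_swap (n-k) S \<circ> p) ` {n-m+1..n}))) =
    of_nat (fact k * (fact (m-k) * fact (n-m))) *
      (\<Sum>i=0..m-k. of_nat (((m-k+card S) choose i) * ((n-m-card S) choose (m-k-i))) * b (i + (k - card S)))"
proof -
  define q X where "q = col_swap (n - k) S" and "X = {n-m+1..n-k} \<union> S"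
  have invol: "q (q x) = x" for x
    unfolding q_def using assms by (intro col_swap_col_swap) (auto simp: subset_iff)
  have "X \<subseteq> {1..n-k}"
    using assms by (auto simp: X_def subset_iff)
  have "x \<notin> S" if "x \<in> {n-m+1..n-k}" for x
    using that subsetD[OF S, of x] assms by auto
  then have "{n-m+1..n-k} \<inter> S = {}" "finite S"
    using finite_subset[OF S] by auto
  then have card_X: "card X = m - k + card S"
    using assms by (simp add: X_def card_Un_disjoint)
  have "(\<Sum>p\<in>row_group n k. b (card ({n-m+1..n} \<inter> (q \<circ> p) ` {n-m+1..n}))) =
      (\<Sum>p\<in>row_group n k. b (card (q ` {n-m+1..n} \<inter> p ` {n-m+1..n})))"
    by (intro sum.cong refl) (simp only: image_comp[symmetric] card_Int_image_involution[OF invol])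
  also have "\<dots> = of_nat (fact k * (fact (m-k) * fact (n-m))) *
      (\<Sum>A | A \<subseteq> {1..n-k} \<and> card A = m - k. b (card (A \<inter> X) + (k - card S)))"
    using sum_row_group_image_Omega[of k m n "\<lambda>Y. b (card (q ` {n-m+1..n} \<inter> Y))"]
      card_col_swap_image_Omega_Int[OF assms] assms by (simp add: q_def X_def)
  also have "(\<Sum>A | A \<subseteq> {1..n-k} \<and> card A = m - k. b (card (A \<inter> X) + (k - card S))) =
      (\<Sum>i=0..m-k. of_nat ((card X choose i) * ((card {1..n-k} - card X) choose (m - k - i))) *
        b (i + (k - card S)))"
    by (rule sum_subsets_card_Int[OF finite_atLeastAtMost \<open>X \<subseteq> {1..n-k}\<close>])
  finally show ?thesis
    using card_X assms by (simp add: q_def)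
qed

text \<open>Substitute \<open>i = m - k - w\<close> and split \<open>(m-k)! = w! (m-k-w)! (m-k choose w)\<close>.\<close>

lemma scaled_choose_sum_reflect:
  fixes b :: "nat \<Rightarrow> 'a::comm_ring_1"
  assumes "v \<le> k" "k \<le> m"
  shows "of_nat (k choose v) * ((-1)^v * (of_nat (fact k * (fact (m-k) * fact (n-m))) *
     (\<Sum>i=0..m-k. of_nat (((m-k+v) choose i) * ((n-m-v) choose (m-k-i))) * b (i + (k - v))))) =
   (\<Sum>w=0..m-k. (-1)^v * of_nat (k choose v) * of_nat ((m-k) choose w)
       * of_nat ((n-m-v) choose w) * of_nat (fact w) * of_nat ((m-k+v) choose (m-k-w))
       * of_nat (fact (m-k-w)) * of_nat (fact k) * of_nat (fact (n-m)) * b (m-v-w))"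
proof -
  have reflect: "(\<Sum>i=0..m-k. of_nat (((m-k+v) choose i) * ((n-m-v) choose (m-k-i))) * b (i + (k - v))) =
     (\<Sum>w=0..m-k. of_nat (((m-k+v) choose (m-k-w)) * ((n-m-v) choose w)) * b (m-v-w))"
    using assms by (subst sum.atLeastAtMost_rev) (intro sum.cong refl; simp add: ac_simps)
  show ?thesis
    unfolding reflect sum_distrib_left
  proof (rule sum.cong[OF refl], goal_cases)
    case (1 w)
    then have "fact (m-k) = (fact w * fact (m-k-w) * ((m-k) choose w) :: nat)"
      using binomial_fact_lemma[of w "m - k"] by simp
    then show ?case
      by (simp add: ac_simps)
  qed
qed

theorem lemma6:
  fixes n m k :: nat and b :: "nat \<Rightarrow> complex"
  assumes "0 < n" and "m \<le> n div 2" and "k \<le> m"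
  shows "B_apply n m b (pi_map n m (young_c n k)) (Omega n m) =
    (\<Sum>v=0..k. \<Sum>w=0..m-k. (-1)^v * of_nat (k choose v) * of_nat ((m-k) choose w)
       * of_nat ((n-m-v) choose w) * of_nat (fact w) * of_nat ((m-k+v) choose (m-k-w))
       * of_nat (fact (m-k-w)) * of_nat (fact k) * of_nat (fact (n-m)) * b (m-v-w))"
  (is "_ = ?rhs")
proof -
  have mn: "2 * m \<le> n" and kn: "2 * k \<le> n"
    using assms(2,3) by auto
  define \<Omega> where "\<Omega> = {n-m+1..n}"
  define \<Phi> where "\<Phi> v = of_nat (fact k * (fact (m-k) * fact (n-m))) *
    (\<Sum>i=0..m-k. of_nat (((m-k+v) choose i) * ((n-m-v) choose (m-k-i))) * b (i + (k - v)))" for v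
  have "B_apply n m b (pi_map n m (young_c n k)) (Omega n m) =
      (\<Sum>g\<in>Sn n. young_c n k g * b (card (\<Omega> \<inter> g ` \<Omega>)))"
    using B_apply_pi_map_Omega mn by (simp add: Omega_def \<Omega>_def)
  also have "\<dots> = (\<Sum>q\<in>col_group n k. of_int (sign q) * (\<Sum>p\<in>row_group n k. b (card (\<Omega> \<inter> (q \<circ> p) ` \<Omega>))))"
    by (simp add: sum_young_c sum_distrib_left)
  also have "\<dots> = (\<Sum>S\<in>Pow {1..k}. of_int (sign (col_swap (n-k) S)) *
      (\<Sum>p\<in>row_group n k. b (card (\<Omega> \<inter> (col_swap (n-k) S \<circ> p) ` \<Omega>))))"
    by (rule sum.reindex_bij_betw[OF col_swap_bij_col_group[OF kn], symmetric])
  also have "\<dots> = (\<Sum>S\<in>Pow {1..k}. (-1) ^ card S * \<Phi> (card S))"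
    using sign_col_swap[OF _ kn] sum_row_group_col_swap[OF _ assms(3) mn, where b = b]
    by (intro sum.cong refl) (simp add: \<Omega>_def \<Phi>_def)
  also have "\<dots> = (\<Sum>v=0..k. of_nat (k choose v) * ((-1) ^ v * \<Phi> v))"
    using sum_Pow_card[of "{1..k}" "\<lambda>v. (-1) ^ v * \<Phi> v"] by simp
  also have "\<dots> = ?rhs"
    unfolding \<Phi>_def using assms(3) by (intro sum.cong refl scaled_choose_sum_reflect) auto
  finally show ?thesis .
qed

end
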